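(* Fix $T>0$ and $r>0$. For $a<0$, let $k^{\rm opt}_T(a)$ denote the minimizer of $J(k)=(1+rk^2)f_a(k)$ over $k\in(a,k_u(a))$. Then $$\lim_{a\to-\infty}\frac{1}{k^{\rm opt}_T(a)}\cdot\frac{e^{Ta}}{2r|a|}=1 .$$
   Context: For real $a$ with $aT<1$ and $T>0$, $k_u(a)$ is the unique solution $k>|a|$ of $T\sqrt{k^2-a^2}=\arccos(a/k)$; the interval $(a,k_u(a))$ is exactly the set of real gains $k$ for which $\dot x(t)=ax(t)-kx(t-T)$ is exponentially stable. For such $k$, define $$f_a(k)=\int_{-\infty}^{+\infty}\frac{d\omega}{\left|j\omega-a+ke^{-jT\omega}\right|^2},$$ which equals the squared $\mathcal H_2$-norm of the transfer function $1/(s-a+ke^{-Ts})$; explicitly, with $\ell=\sqrt{|k^2-a^2|}$, $f_a(k)=\frac{-k\sinh(\ell T)-\ell}{2\ell(a-k\cosh(\ell T))}$ if $|k|<-a$; $f_a(k)=\frac T4+\frac1{4|a|}$ if $k=|a|$, $a\neq0$; $f_a(k)=\frac{-k\sin(\ell T)-\ell}{2\ell(a-k\cos(\ell T))}$ if $|a|<k<k_u(a)$. The quantity $(1+rk^2)f_a(k)$ is the squared $\mathcal H_2$-norm from the disturbance $v$ to the output $z=(x,\sqrt r\,u)$ for $\dot x=ax+u+v$, $u(t)=-kx(t-T)$, with control weight $r>0$. *)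

theory Defs
  imports "HOL-Analysis.Analysis"
begin

definition k_u :: "real \<Rightarrow> real \<Rightarrow> real" where
  "k_u T a = (THE k. k > \<bar>a\<bar> \<and> T * sqrt (k\<^sup>2 - a\<^sup>2) = arccos (a / k))"

text \<open>Squared H2-norm of 1/(s - a + k e^{-Ts}), defined as the frequency-domain integral.\<close>
definition f_H2 :: "real \<Rightarrow> real \<Rightarrow> real \<Rightarrow> real" where
  "f_H2 T a k = integral UNIV (\<lambda>\<omega>::real.
      1 / (cmod (\<i> * complex_of_real \<omega> - complex_of_real a
                 + complex_of_real k * exp (- \<i> * complex_of_real (T * \<omega>))))\<^sup>2)"

definition J_cost :: "real \<Rightarrow> real \<Rightarrow> real \<Rightarrow> real \<Rightarrow> real" where
  "J_cost T r a k = (1 + r * k\<^sup>2) * f_H2 T a k"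

definition is_kopt :: "real \<Rightarrow> real \<Rightarrow> real \<Rightarrow> real \<Rightarrow> bool" where
  "is_kopt T r a k \<longleftrightarrow> a < k \<and> k < k_u T a \<and>
     (\<forall>k'. a < k' \<and> k' < k_u T a \<longrightarrow> J_cost T r a k \<le> J_cost T r a k')"

end

theory Submission
  imports Defs "HOL-Complex_Analysis.Complex_Analysis" "HOL-Real_Asymp.Real_Asymp"
begin

lemma ball_subset_cbox_real:
  fixes B a b :: real
  assumes "B > 0" "ball 0 B \<subseteq> cbox a b"
  shows "a \<le> -B" "B \<le> b"
proof -
  have "{-B<..<B} \<subseteq> {a..b}"
    using assms(2) by (auto simp: subset_iff dist_real_def abs_less_iff)
  with assms(1) show "a \<le> -B" "B \<le> b"
    using closure_mono[of "{-B<..<B}" "{a..b}"] by (auto simp: closure_greaterThanLessThan)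
qed

lemma fundamental_theorem_of_calculus_UNIV:
  fixes f F :: "real \<Rightarrow> 'a::banach"
  assumes der: "\<And>x. (F has_vector_derivative f x) (at x)"
    and bot: "(F \<longlongrightarrow> L) at_bot" and top: "(F \<longlongrightarrow> U) at_top"
  shows "(f has_integral (U - L)) UNIV"
proof -
  have ftc: "(f has_integral (F y - F x)) {x..y}" if "x \<le> y" for x y
    using fundamental_theorem_of_calculus[OF that] der by (auto intro: has_vector_derivative_at_within)
  show ?thesis
    unfolding has_integral_alt'[of f]
  proof (intro conjI allI impI)
    fix x y :: real
    show "(\<lambda>t. if t \<in> UNIV then f t else 0) integrable_on cbox x y"
      using ftc[of x y] by (cases "x \<le> y") (auto simp: integrable_on_def)
  next
    fix e :: real assume "e > 0"
    then obtain B1 B2 where B1: "\<And>x. x \<le> B1 \<Longrightarrow> dist (F x) L < e/2"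
      and B2: "\<And>x. B2 \<le> x \<Longrightarrow> dist (F x) U < e/2"
      using tendstoD[OF bot, of "e/2"] tendstoD[OF top, of "e/2"]
      by (auto simp: eventually_at_bot_linorder eventually_at_top_linorder)
    define B where "B = max 1 (max (-B1) B2)"
    have "B > 0" by (simp add: B_def)
    have "norm (integral (cbox x y) (\<lambda>t. if t \<in> UNIV then f t else 0) - (U - L)) < e"
      if "ball 0 B \<subseteq> cbox x y" for x y
    proof -
      have "x \<le> B1" "B2 \<le> y" "x \<le> y"
        using ball_subset_cbox_real[OF \<open>B > 0\<close> that] by (auto simp: B_def)
      then have "integral (cbox x y) (\<lambda>t. if t \<in> UNIV then f t else 0) - (U - L)
          = (F y - U) - (F x - L)"
        using ftc[of x y] by (simp add: integral_unique)
      also have "norm \<dots> < e"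
        using norm_triangle_ineq4[of "F y - U" "F x - L"] B1[OF \<open>x \<le> B1\<close>] B2[OF \<open>B2 \<le> y\<close>]
        by (simp add: dist_norm)
      finally show ?thesis .
    qed
    with \<open>B > 0\<close> show "\<exists>B>0. \<forall>x y. ball 0 B \<subseteq> cbox x y \<longrightarrow>
        norm (integral (cbox x y) (\<lambda>t. if t \<in> UNIV then f t else 0) - (U - L)) < e"
      by blast
  qed
qed

lemma tendsto_integral_symmetric_interval:
  fixes f :: "real \<Rightarrow> 'a::banach"
  assumes "(f has_integral I) UNIV"
  shows "((\<lambda>R. integral {-R..R} f) \<longlongrightarrow> I) at_top"
proof (rule tendstoI)
  fix e :: real assume "e > 0"
  then obtain B where "B > 0"
    and B: "\<And>x y. ball 0 B \<subseteq> cbox x y \<Longrightarrow> norm (integral (cbox x y) f - I) < e"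
    using assms unfolding has_integral_alt'[of f] by auto
  have "dist (integral {-R..R} f) I < e" if "B \<le> R" for R
  proof -
    have "ball 0 B \<subseteq> cbox (-R) R"
      using that by (auto simp: dist_real_def)
    then show ?thesis
      using B by (simp add: dist_norm)
  qed
  then show "eventually (\<lambda>R. dist (integral {-R..R} f) I < e) at_top"
    by (auto simp: eventually_at_top_linorder)
qed

lemma has_real_derivative_arctan_div:
  fixes b :: real
  assumes "b > 0"
  shows "((\<lambda>x. arctan (x / b)) has_real_derivative b / (x\<^sup>2 + b\<^sup>2)) (at x)"
proof -
  have "x\<^sup>2 + b\<^sup>2 > 0"
    using assms by (simp add: add_nonneg_pos)
  then show ?thesis
    using assms by (auto intro!: derivative_eq_intros simp: divide_simps)
      (simp add: power2_eq_square algebra_simps)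
qed

lemma has_real_derivative_div_square_plus:
  fixes b :: real
  assumes "b > 0"
  shows "((\<lambda>x. x / (x\<^sup>2 + b\<^sup>2)) has_real_derivative (b\<^sup>2 - x\<^sup>2) / (x\<^sup>2 + b\<^sup>2)\<^sup>2) (at x)"
proof -
  have "x\<^sup>2 + b\<^sup>2 > 0"
    using assms by (simp add: add_nonneg_pos)
  then show ?thesis
    using assms by (auto intro!: derivative_eq_intros simp: divide_simps)
      (simp add: power2_eq_square algebra_simps)
qed

lemma has_integral_inverse_square_plus:
  fixes b :: real
  assumes "b > 0"
  shows "((\<lambda>x. 1 / (x\<^sup>2 + b\<^sup>2)) has_integral (pi / b)) UNIV"
proof -
  have "((\<lambda>x. arctan (x / b) / b) has_vector_derivative 1 / (x\<^sup>2 + b\<^sup>2)) (at x)" for x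
    using DERIV_cdivide[OF has_real_derivative_arctan_div[OF assms], where c = b] assms
    by (simp add: has_real_derivative_iff_has_vector_derivative)
  moreover have "((\<lambda>x. arctan (x / b) / b) \<longlongrightarrow> -pi/2/b) at_bot"
    and "((\<lambda>x. arctan (x / b) / b) \<longlongrightarrow> pi/2/b) at_top"
    using assms by (real_asymp simp: field_simps)+
  ultimately show ?thesis
    using fundamental_theorem_of_calculus_UNIV by fastforce
qed

lemma has_integral_inverse_square_plus_squared:
  fixes b :: real
  assumes "b > 0"
  shows "((\<lambda>x. 1 / (x\<^sup>2 + b\<^sup>2)\<^sup>2) has_integral (pi / (2 * b ^ 3))) UNIV"
proof -
  define F where "F = (\<lambda>x. x / (x\<^sup>2 + b\<^sup>2) / (2 * b\<^sup>2) + arctan (x / b) / (2 * b ^ 3))"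
  have "(F has_vector_derivative 1 / (x\<^sup>2 + b\<^sup>2)\<^sup>2) (at x)" for x
  proof -
    have "(b\<^sup>2 - x\<^sup>2) / A\<^sup>2 / (2 * b\<^sup>2) + b / A / (2 * b ^ 3) = (b\<^sup>2 - x\<^sup>2 + A) / (2 * b\<^sup>2 * A\<^sup>2)"
      if "A > 0" for A
      using that assms by (simp add: field_simps power2_eq_square power3_eq_cube)
    moreover have "x\<^sup>2 + b\<^sup>2 > 0"
      using assms by (simp add: add_nonneg_pos)
    ultimately have "(b\<^sup>2 - x\<^sup>2) / (x\<^sup>2 + b\<^sup>2)\<^sup>2 / (2 * b\<^sup>2) + b / (x\<^sup>2 + b\<^sup>2) / (2 * b ^ 3)
        = 1 / (x\<^sup>2 + b\<^sup>2)\<^sup>2"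
      using assms by simp
    moreover have "(F has_real_derivative
        (b\<^sup>2 - x\<^sup>2) / (x\<^sup>2 + b\<^sup>2)\<^sup>2 / (2 * b\<^sup>2) + b / (x\<^sup>2 + b\<^sup>2) / (2 * b ^ 3)) (at x)"
      unfolding F_def
      by (intro DERIV_add DERIV_cdivide has_real_derivative_div_square_plus
          has_real_derivative_arctan_div assms)
    ultimately show ?thesis
      by (simp add: has_real_derivative_iff_has_vector_derivative)
  qed
  moreover have "(F \<longlongrightarrow> -pi/2/(2 * b ^ 3)) at_bot" and "(F \<longlongrightarrow> pi/2/(2 * b ^ 3)) at_top"
    using assms unfolding F_def by (real_asymp simp: field_simps)+
  ultimately show ?thesis
    using fundamental_theorem_of_calculus_UNIV by fastforce
qed

lemma arc_point_upper_half:
  assumes "R > 0" "z \<in> path_image (part_circlepath 0 R 0 pi)"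
  shows "cmod z = R" "Im z \<ge> 0"
proof -
  obtain t where t: "0 \<le> t" "t \<le> pi" "z = R * exp (\<i> * of_real t)"
    using assms(2) by (auto simp: path_image_part_circlepath)
  then show "cmod z = R"
    using assms(1) by (simp add: norm_mult)
  show "Im z \<ge> 0"
    using t assms(1) sin_ge_zero by (simp add: Im_exp)
qed

lemma integral_segment_add_upper_arc_eq_0:
  fixes f :: "complex \<Rightarrow> complex"
  assumes hol: "f holomorphic_on S" and S: "open S" "convex S" "{z. Im z \<ge> 0} \<subseteq> S"
    and "R > 0"
  shows "integral {-R..R} (\<lambda>x. f (of_real x)) + contour_integral (part_circlepath 0 R 0 pi) f = 0"
proof -
  define seg where "seg = linepath (of_real (-R)) (of_real R :: complex)"
  define arc where "arc = part_circlepath 0 R 0 pi"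
  have valid: "valid_path seg" "valid_path arc"
    by (simp_all add: seg_def arc_def)
  have "path_image seg \<subseteq> S" "path_image arc \<subseteq> S"
    using S(3) arc_point_upper_half[OF \<open>R > 0\<close>]
    by (auto simp: seg_def arc_def closed_segment_def)
  then have integrable: "f contour_integrable_on seg" "f contour_integrable_on arc"
    using contour_integrable_holomorphic_simple[OF hol S(1)] valid by auto
  have "(f has_contour_integral 0) (seg +++ arc)"
    using Cauchy_theorem_convex_simple[OF hol S(2)] valid \<open>path_image seg \<subseteq> S\<close> \<open>path_image arc \<subseteq> S\<close>
    by (simp add: seg_def arc_def path_image_join)
  then have "contour_integral seg f + contour_integral arc f = 0"
    using contour_integral_join[OF integrable valid] contour_integral_unique by metis
  moreover have "contour_integral seg f = integral {-R..R} (\<lambda>x. f (of_real x))"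
    unfolding seg_def using \<open>R > 0\<close> by (subst contour_integral_linepath_Reals_eq) auto
  ultimately show ?thesis
    by (simp add: arc_def)
qed

lemma has_integral_real_line_eq_0_if_decay:
  fixes f :: "complex \<Rightarrow> complex"
  assumes hol: "f holomorphic_on S" and S: "open S" "convex S" "{z. Im z \<ge> 0} \<subseteq> S"
    and integrable: "(\<lambda>x. f (of_real x)) integrable_on UNIV"
    and decay: "\<And>z. Im z \<ge> 0 \<Longrightarrow> R0 \<le> cmod z \<Longrightarrow> cmod (f z) \<le> M / (cmod z)\<^sup>2"
  shows "((\<lambda>x. f (of_real x)) has_integral 0) UNIV"
proof -
  obtain I where I: "((\<lambda>x. f (of_real x)) has_integral I) UNIV"
    using integrable by (auto simp: integrable_on_def)
  have arc_bound: "norm (integral {-R..R} (\<lambda>x. f (of_real x))) \<le> M * pi / R"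
    if R: "R \<ge> max R0 1" for R
  proof -
    have "R > 0" using R by simp
    have "f contour_integrable_on part_circlepath 0 R 0 pi"
      using S(3) arc_point_upper_half[OF \<open>R > 0\<close>]
      by (intro contour_integrable_holomorphic_simple[OF hol S(1)]) auto
    moreover have bound: "norm (f z) \<le> M / R\<^sup>2" if "z \<in> path_image (part_circlepath 0 R 0 pi)" for z
      using decay arc_point_upper_half[OF \<open>R > 0\<close> that] R by fastforce
    moreover have "0 \<le> M / R\<^sup>2"
      using bound[OF pathstart_in_path_image] norm_ge_zero order_trans by blast
    ultimately have "norm (contour_integral (part_circlepath 0 R 0 pi) f) \<le> M / R\<^sup>2 * R * \<bar>pi - 0\<bar>"
      using \<open>R > 0\<close> by (intro contour_integral_bound_part_circlepath) auto
    then show ?thesis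
      using integral_segment_add_upper_arc_eq_0[OF hol S \<open>R > 0\<close>] \<open>R > 0\<close>
      by (simp add: add_eq_0_iff power2_eq_square)
  qed
  have "((\<lambda>R. integral {-R..R} (\<lambda>x. f (of_real x))) \<longlongrightarrow> 0) at_top"
  proof (rule Lim_null_comparison)
    show "eventually (\<lambda>R. norm (integral {-R..R} (\<lambda>x. f (of_real x))) \<le> M * pi / R) at_top"
      using arc_bound eventually_ge_at_top by (rule eventually_mono[rotated])
    show "((\<lambda>R. M * pi / R) \<longlongrightarrow> 0) at_top"
      by real_asymp
  qed
  with tendsto_integral_symmetric_interval[OF I] have "I = 0"
    by (rule tendsto_unique[rotated]) simp
  with I show ?thesis by simp
qed

lemma has_integral_delay_kernel:
  fixes b T :: real
  assumes b: "b > 0" and T: "T \<ge> 0"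
  shows "((\<lambda>x. (b * cos (T * x) - x * sin (T * x)) / (x\<^sup>2 + b\<^sup>2)\<^sup>2)
           has_integral (pi * exp (- T * b) / (2 * b\<^sup>2))) UNIV"
proof -
  define c where "c = \<i> * complex_of_real b"
  define E where "E = (\<lambda>z. exp (\<i> * of_real T * z))"
  define g where "g = (\<lambda>z. if z = c then deriv E c else (E z - E c) / (z - c))"
  define \<psi> where "\<psi> = (\<lambda>z. g z * (\<i> / (z + c)\<^sup>2))"
  define S where "S = {z. Im z > - b / 2}"
  have "open S" "convex S" "{z. Im z \<ge> 0} \<subseteq> S"
    using b by (auto simp: S_def open_halfspace_Im_gt convex_halfspace_Im_gt)
  have "g holomorphic_on S"
    unfolding g_def E_def by (intro pole_lemma_open \<open>open S\<close> holomorphic_intros)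
  moreover have "z + c \<noteq> 0" if "z \<in> S" for z
    using that b by (auto simp: S_def c_def complex_eq_iff)
  ultimately have hol: "\<psi> holomorphic_on S"
    unfolding \<psi>_def by (auto intro!: holomorphic_intros)
  have Ec: "E c = exp (- T * b)"
    by (simp add: E_def c_def exp_of_real[symmetric] algebra_simps)
  have numerator_bound: "cmod (E z - E c) \<le> 2" if "Im z \<ge> 0" for z
  proof -
    have "cmod (E w) \<le> 1" if "Im w \<ge> 0" for w
      using that T by (simp add: E_def norm_exp mult_nonneg_nonneg)
    then have "cmod (E z) \<le> 1" "cmod (E c) \<le> 1"
      using that b by (auto simp: c_def)
    then show ?thesis
      using norm_triangle_ineq4[of "E z" "E c"] by linarith
  qed
  have \<psi>_real: "\<psi> x = (E x - exp (- T * b)) * (b + \<i> * x) / of_real ((x\<^sup>2 + b\<^sup>2)\<^sup>2)" for x :: real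
  proof -
    define m where "m = of_real x - c"
    define p where "p = of_real x + c"
    have "m \<noteq> 0" "p \<noteq> 0"
      using b by (auto simp: m_def p_def c_def complex_eq_iff)
    have "\<psi> x = (E x - E c) / m * (\<i> / p\<^sup>2)"
      using \<open>m \<noteq> 0\<close> by (simp add: \<psi>_def g_def m_def p_def)
    also have "\<dots> = (E x - E c) * (\<i> * m) / (m * p)\<^sup>2"
      using \<open>m \<noteq> 0\<close> \<open>p \<noteq> 0\<close> by (simp add: field_simps power2_eq_square)
    also have "\<dots> = (E x - exp (- T * b)) * (b + \<i> * x) / of_real ((x\<^sup>2 + b\<^sup>2)\<^sup>2)"
      unfolding Ec by (simp add: m_def p_def c_def algebra_simps power2_eq_square)
    finally show ?thesis .
  qed
  have real_bound: "cmod (\<psi> x) \<le> 2 / b * (1 / (x\<^sup>2 + b\<^sup>2))" for x :: real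
  proof -
    have cancel: "2 * (A / b) / A\<^sup>2 = 2 / b * (1 / A)" if "A \<noteq> 0" for A
      using that by (simp add: power2_eq_square)
    have A: "x\<^sup>2 + b\<^sup>2 > 0"
      using b by (simp add: add_nonneg_pos)
    have "cmod (complex_of_real b + \<i> * x) = sqrt (x\<^sup>2 + b\<^sup>2)"
      by (simp add: cmod_def add.commute)
    also have "\<dots> \<le> (x\<^sup>2 + b\<^sup>2) / b"
    proof -
      have "b \<le> sqrt (x\<^sup>2 + b\<^sup>2)"
        by (simp add: real_le_rsqrt)
      then have "sqrt (x\<^sup>2 + b\<^sup>2) * b \<le> sqrt (x\<^sup>2 + b\<^sup>2) * sqrt (x\<^sup>2 + b\<^sup>2)"
        by (intro mult_left_mono) auto
      then show ?thesis
        using A b by (simp add: pos_le_divide_eq)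
    qed
    finally have "cmod ((E x - exp (- T * b)) * (b + \<i> * x)) \<le> 2 * ((x\<^sup>2 + b\<^sup>2) / b)"
      using numerator_bound[of "of_real x"] Ec unfolding norm_mult
      by (intro mult_mono) auto
    then have "cmod (\<psi> x) \<le> 2 * ((x\<^sup>2 + b\<^sup>2) / b) / (x\<^sup>2 + b\<^sup>2)\<^sup>2"
      unfolding \<psi>_real norm_divide norm_of_real abs_power2 by (rule divide_right_mono) simp
    also have "\<dots> = 2 / b * (1 / (x\<^sup>2 + b\<^sup>2))"
      using A by (intro cancel) linarith
    finally show ?thesis .
  qed
  have majorant: "(\<lambda>x. 2 / b * (1 / (x\<^sup>2 + b\<^sup>2))) integrable_on UNIV"
    using has_integral_inverse_square_plus[OF b] by (intro integrable_on_mult_right) blast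
  have "continuous_on UNIV (\<lambda>x. \<psi> (of_real x))"
    by (rule continuous_on_compose2[OF holomorphic_on_imp_continuous_on[OF hol]])
      (use \<open>{z. Im z \<ge> 0} \<subseteq> S\<close> in \<open>auto intro!: continuous_intros\<close>)
  then have "(\<lambda>x. if x \<in> UNIV then \<psi> (of_real x) else 0) integrable_on cbox u v" for u v
    using integrable_continuous_interval[OF continuous_on_subset[OF _ subset_UNIV]] by simp
  from integrable_on_all_intervals_integrable_bound[OF this real_bound majorant]
  have integrable: "(\<lambda>x. \<psi> (of_real x)) integrable_on UNIV" .
  have decay: "cmod (\<psi> z) \<le> 8 / b / (cmod z)\<^sup>2" if z: "Im z \<ge> 0" "2 * b \<le> cmod z" for z
  proof -
    have far: "cmod z / 2 \<le> cmod (z - c)" "cmod z / 2 \<le> cmod (z + c)"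
      using norm_triangle_ineq2[of z c] norm_diff_ineq[of z c] z b by (auto simp: c_def norm_mult)
    have "z \<noteq> c" "cmod z > 0"
      using z b by (auto simp: c_def norm_mult)
    then have "cmod (\<psi> z) = cmod (E z - E c) / cmod (z - c) / (cmod (z + c))\<^sup>2"
      by (simp add: \<psi>_def g_def norm_mult norm_divide norm_power)
    also have "\<dots> \<le> 2 / (cmod z / 2) / (cmod z / 2)\<^sup>2"
      using numerator_bound[OF z(1)] far \<open>cmod z > 0\<close>
      by (intro frac_le power_mono) auto
    also have "\<dots> = 16 / cmod z / (cmod z)\<^sup>2"
      by (simp add: field_simps power2_eq_square)
    also have "\<dots> \<le> 8 / b / (cmod z)\<^sup>2"
      using z b \<open>cmod z > 0\<close> by (intro divide_right_mono) (auto simp: field_simps)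
    finally show ?thesis .
  qed
  have "((\<lambda>x. Re (\<psi> (of_real x))) has_integral 0) UNIV"
    using has_integral_Re[OF has_integral_real_line_eq_0_if_decay[OF hol \<open>open S\<close> \<open>convex S\<close>
          \<open>{z. Im z \<ge> 0} \<subseteq> S\<close> integrable decay]] by simp
  from has_integral_add[OF this has_integral_mult_right[OF has_integral_inverse_square_plus_squared[OF b]]]
  have "((\<lambda>x. Re (\<psi> (of_real x)) + exp (- T * b) * b * (1 / (x\<^sup>2 + b\<^sup>2)\<^sup>2)) has_integral
      0 + exp (- T * b) * b * (pi / (2 * b ^ 3))) UNIV" .
  moreover have "Re (\<psi> (of_real x)) + exp (- T * b) * b * (1 / (x\<^sup>2 + b\<^sup>2)\<^sup>2)
      = (b * cos (T * x) - x * sin (T * x)) / (x\<^sup>2 + b\<^sup>2)\<^sup>2" for x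
    unfolding \<psi>_real Re_divide_of_real
    by (simp add: E_def Re_exp Im_exp algebra_simps diff_divide_distrib add_divide_distrib)
  moreover have "0 + exp (- T * b) * b * (pi / (2 * b ^ 3)) = pi * exp (- T * b) / (2 * b\<^sup>2)"
    using b by (simp add: power2_eq_square power3_eq_cube)
  ultimately show ?thesis
    by simp
qed

definition char_sqnorm :: "real \<Rightarrow> real \<Rightarrow> real \<Rightarrow> real \<Rightarrow> real" where
  "char_sqnorm T a k w = (- a + k * cos (T * w))\<^sup>2 + (w - k * sin (T * w))\<^sup>2"

lemma char_sqnorm_nonneg: "char_sqnorm T a k w \<ge> 0"
  by (simp add: char_sqnorm_def)

lemma char_sqnorm_eq_cmod:
  "char_sqnorm T a k w = (cmod (\<i> * of_real w - of_real a + of_real k * exp (- \<i> * of_real (T * w))))\<^sup>2"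
  by (simp add: char_sqnorm_def cmod_power2 Re_exp Im_exp)

lemma f_H2_eq_integral_char_sqnorm: "f_H2 T a k = integral UNIV (\<lambda>w. 1 / char_sqnorm T a k w)"
  by (simp add: f_H2_def char_sqnorm_eq_cmod)

lemma char_sqnorm_expand:
  "char_sqnorm T a k w = w\<^sup>2 + a\<^sup>2 + k\<^sup>2 + 2 * k * (- a * cos (T * w) - w * sin (T * w))"
proof -
  define s c where "s = sin (T * w)" and "c = cos (T * w)"
  have "(- a + k * c)\<^sup>2 + (w - k * s)\<^sup>2 = w\<^sup>2 + a\<^sup>2 + k\<^sup>2 * (s\<^sup>2 + c\<^sup>2) + 2 * k * (- a * c - w * s)"
    by (simp add: power2_eq_square algebra_simps)
  then show ?thesis
    by (simp add: char_sqnorm_def flip: s_def c_def) (simp add: s_def c_def)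
qed

lemma cross_term_sq_le:
  fixes s c a w :: real
  assumes "s\<^sup>2 + c\<^sup>2 = 1"
  shows "(- a * c - w * s)\<^sup>2 \<le> w\<^sup>2 + a\<^sup>2"
proof -
  have "(w\<^sup>2 + a\<^sup>2) * (s\<^sup>2 + c\<^sup>2) - (- a * c - w * s)\<^sup>2 = (w * c - a * s)\<^sup>2"
    by (simp add: power2_eq_square algebra_simps)
  then show ?thesis
    using assms by (metis mult_1_right zero_le_power2 diff_ge_0_iff_ge)
qed

lemma char_sqnorm_ge: "char_sqnorm T a k w \<ge> w\<^sup>2 / 2 + a\<^sup>2 / 2 - k\<^sup>2"
proof -
  define C where "C = - a * cos (T * w) - w * sin (T * w)"
  have "- 2 * k * C \<le> 2 * k\<^sup>2 + C\<^sup>2 / 2"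
    using zero_le_power2[of "2 * k + C"] by (simp add: power2_eq_square algebra_simps)
  then show ?thesis
    using cross_term_sq_le[of "sin (T * w)" "cos (T * w)" a w]
    unfolding char_sqnorm_expand C_def[symmetric] by simp
qed

lemma char_sqnorm_eq_0_iff:
  "char_sqnorm T a k w = 0 \<longleftrightarrow> - a + k * cos (T * w) = 0 \<and> w = k * sin (T * w)"
  by (simp add: char_sqnorm_def sum_power2_eq_zero_iff)

lemma char_sqnorm_at_pole: "char_sqnorm T a a 0 = 0"
  by (simp add: char_sqnorm_def)

lemma norm_exp_i_diff_le: "cmod (exp (\<i> * of_real x) - exp (\<i> * of_real y)) \<le> \<bar>x - y\<bar>"
proof -
  define t where "t = x - y"
  have "exp (\<i> * of_real x) - exp (\<i> * of_real y) = exp (\<i> * of_real y) * (exp (\<i> * of_real t) - 1)"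
    by (simp add: t_def algebra_simps flip: exp_add)
  then have eq: "cmod (exp (\<i> * of_real x) - exp (\<i> * of_real y)) = cmod (exp (\<i> * of_real t) - 1)"
    by (simp add: norm_mult)
  have "(cmod (exp (\<i> * of_real t) - 1))\<^sup>2 = (cos t - 1)\<^sup>2 + (sin t)\<^sup>2"
    by (simp add: cmod_power2 Re_exp Im_exp)
  also have "\<dots> = 2 - 2 * cos t"
    using sin_cos_squared_add[of t] by (simp add: power2_eq_square algebra_simps)
  also have "\<dots> = 4 * (sin (t / 2))\<^sup>2"
    using cos_double_sin[of "t / 2"] by simp
  also have "\<dots> \<le> 4 * (t / 2)\<^sup>2"
  proof -
    have "\<bar>sin (t / 2)\<bar>\<^sup>2 \<le> \<bar>t / 2\<bar>\<^sup>2"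
      by (rule power_mono[OF abs_sin_x_le_abs_x]) simp
    then show ?thesis
      by (simp only: power2_abs)
  qed
  also have "\<dots> = \<bar>t\<bar>\<^sup>2"
    by (simp add: power2_eq_square)
  finally show ?thesis
    unfolding eq t_def by (rule power2_le_imp_le) simp
qed

lemma sqrt_char_sqnorm_lipschitz:
  assumes "T \<ge> 0"
  shows "sqrt (char_sqnorm T a k w)
    \<le> sqrt (char_sqnorm T a k' w') + \<bar>k - k'\<bar> + (1 + T * \<bar>k\<bar>) * \<bar>w - w'\<bar>"
proof -
  define E where "E = (\<lambda>w. exp (- \<i> * complex_of_real (T * w)))"
  define D where "D = (\<lambda>k w. \<i> * of_real w - of_real a + of_real k * E w)"
  define X Y Z where "X = \<i> * of_real (w - w')" and "Y = of_real k * (E w - E w')"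
    and "Z = of_real (k - k') * E w'"
  have "cmod (E w - E w') \<le> \<bar>- (T * w) - - (T * w')\<bar>"
    unfolding E_def using norm_exp_i_diff_le[of "- (T * w)" "- (T * w')"] by simp
  also have "\<dots> = T * \<bar>w - w'\<bar>"
    using assms by (simp add: abs_mult abs_minus_commute flip: right_diff_distrib)
  finally have "cmod Y \<le> \<bar>k\<bar> * (T * \<bar>w - w'\<bar>)"
    unfolding Y_def norm_mult by (simp add: mult_left_mono)
  moreover have "cmod X = \<bar>w - w'\<bar>" "cmod Z = \<bar>k - k'\<bar>"
    by (simp_all add: X_def Z_def E_def norm_mult del: of_real_diff)
  moreover have decomp: "D k w = D k' w' + (X + Y + Z)"
    by (simp add: D_def X_def Y_def Z_def algebra_simps)
  have "cmod (D k w) \<le> cmod (D k' w') + cmod X + cmod Y + cmod Z"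
    unfolding decomp using norm_triangle_ineq[of "D k' w'" "X + Y + Z"] norm_triangle_ineq[of "X + Y" Z]
      norm_triangle_ineq[of X Y] by linarith
  moreover have "sqrt (char_sqnorm T a k w) = cmod (D k w)" for k w
    by (simp add: char_sqnorm_eq_cmod D_def E_def)
  ultimately show ?thesis
    by (simp add: algebra_simps)
qed

definition phase_excess :: "real \<Rightarrow> real \<Rightarrow> real \<Rightarrow> real" where
  "phase_excess T a k = T * sqrt (k\<^sup>2 - a\<^sup>2) - arccos (a / k)"

lemma phase_excess_strict_mono:
  assumes "T > 0" "a < 0" "-a \<le> k" "k < k'"
  shows "phase_excess T a k < phase_excess T a k'"
proof -
  have "k > 0"
    using assms by simp
  then have "k\<^sup>2 < k'\<^sup>2"
    using assms by (intro power_strict_mono) auto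
  then have "T * sqrt (k\<^sup>2 - a\<^sup>2) < T * sqrt (k'\<^sup>2 - a\<^sup>2)"
    using assms by simp
  moreover have "arccos (a / k') \<le> arccos (a / k)"
    using assms \<open>k > 0\<close> by (intro arccos_le_arccos divide_left_mono_neg) (auto simp: field_simps)
  ultimately show ?thesis
    by (simp add: phase_excess_def)
qed

lemma phase_excess_at_minus: "a < 0 \<Longrightarrow> phase_excess T a (-a) = - pi"
  by (simp add: phase_excess_def)

lemma phase_excess_pos:
  assumes "T > 0" "a < 0"
  shows "phase_excess T a (-a + pi / T) > 0"
proof -
  define k where "k = -a + pi / T"
  have "pi / T > 0"
    using assms by simp
  then have "k > 0" "a < pi / T"
    using assms unfolding k_def by linarith+
  have "(pi / T)\<^sup>2 \<le> (pi / T) * (-2 * a + pi / T)"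
    unfolding power2_eq_square using assms \<open>pi / T > 0\<close> by (intro mult_left_mono) auto
  also have "\<dots> = k\<^sup>2 - a\<^sup>2"
    by (simp add: k_def power2_eq_square algebra_simps)
  finally have "pi / T \<le> sqrt (k\<^sup>2 - a\<^sup>2)"
    by (rule real_le_rsqrt)
  then have "pi \<le> T * sqrt (k\<^sup>2 - a\<^sup>2)"
    using assms by (simp add: field_simps)
  moreover have "arccos (a / k) < arccos (-1)"
  proof (rule arccos_less_arccos)
    have "-k < a" "a \<le> k"
      unfolding k_def using assms \<open>pi / T > 0\<close> by linarith+
    then show "-1 < a / k" "a / k \<le> 1"
      using \<open>k > 0\<close> by (simp_all add: field_simps)
  qed simp
  ultimately show ?thesis
    by (simp add: phase_excess_def k_def)
qed

lemma continuous_on_phase_excess: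
  assumes "a < 0" "-a \<le> k1"
  shows "continuous_on {k1..k2} (phase_excess T a)"
proof -
  have "\<forall>k\<in>{k1..k2}. -1 \<le> a / k \<and> a / k \<le> 1"
    using assms by (auto simp: field_simps)
  then show ?thesis
    unfolding phase_excess_def using assms by (intro continuous_intros continuous_on_arccos) auto
qed

lemma k_u_root:
  assumes "T > 0" "a < 0"
  shows "-a < k_u T a" "phase_excess T a (k_u T a) = 0" "k_u T a \<le> -a + pi / T"
proof -
  have "\<exists>k0\<ge>-a. k0 \<le> -a + pi / T \<and> phase_excess T a k0 = 0"
    using phase_excess_at_minus[OF \<open>a < 0\<close>, of T] phase_excess_pos[OF assms] \<open>T > 0\<close>
    by (intro IVT'[OF _ _ _ continuous_on_phase_excess[OF \<open>a < 0\<close> order_refl]]) auto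
  then obtain k0 where k0: "-a \<le> k0" "k0 \<le> -a + pi / T" "phase_excess T a k0 = 0"
    by blast
  have "-a < k0"
    using k0 phase_excess_at_minus[OF \<open>a < 0\<close>, of T] by (cases "k0 = -a") auto
  have unique: "k = k0" if "-a < k" "phase_excess T a k = 0" for k
    using phase_excess_strict_mono[OF assms, of k k0] phase_excess_strict_mono[OF assms, of k0 k]
      that \<open>-a < k0\<close> k0 by (cases k k0 rule: linorder_cases) auto
  have "k_u T a = k0"
    unfolding k_u_def
  proof (rule the_equality)
    show "\<bar>a\<bar> < k0 \<and> T * sqrt (k0\<^sup>2 - a\<^sup>2) = arccos (a / k0)"
      using \<open>-a < k0\<close> k0 \<open>a < 0\<close> by (simp add: phase_excess_def)
    show "k = k0" if "\<bar>a\<bar> < k \<and> T * sqrt (k\<^sup>2 - a\<^sup>2) = arccos (a / k)" for k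
      using that \<open>a < 0\<close> by (intro unique) (auto simp: phase_excess_def)
  qed
  then show "-a < k_u T a" "phase_excess T a (k_u T a) = 0" "k_u T a \<le> -a + pi / T"
    using k0 \<open>-a < k0\<close> by auto
qed

lemma phase_excess_neg:
  assumes "T > 0" "a < 0" "-a \<le> k" "k < k_u T a"
  shows "phase_excess T a k < 0"
  using phase_excess_strict_mono[OF assms] k_u_root(2)[OF assms(1,2)] by simp

lemma char_sqnorm_pos:
  assumes T: "T > 0" and a: "a < 0" and k: "a < k" "k < k_u T a"
  shows "char_sqnorm T a k w > 0"
proof (rule ccontr)
  assume "\<not> char_sqnorm T a k w > 0"
  then have re: "- a + k * cos (T * w) = 0" and im: "w = k * sin (T * w)"
    using char_sqnorm_nonneg[of T a k w] char_sqnorm_eq_0_iff by auto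
  show False
  proof (cases "k \<le> -a")
    case True
    have "a = k * cos (T * w)"
      using re by simp
    then have "\<bar>a\<bar> = \<bar>k\<bar> * \<bar>cos (T * w)\<bar>"
      by (simp add: abs_mult)
    also have "\<dots> \<le> \<bar>k\<bar>"
      using abs_cos_le_one by (simp add: mult_left_le)
    finally have "k = -a"
      using True k a by linarith
    with \<open>a = k * cos (T * w)\<close> have "a * (1 + cos (T * w)) = 0"
      by (simp add: algebra_simps)
    then have "cos (T * w) = -1"
      using a by simp
    then have "sin (T * w) = 0"
      using sin_cos_squared_add[of "T * w"] by simp
    then show False
      using im \<open>cos (T * w) = -1\<close> by simp
  next
    case False
    then have "k > 0"
      using a by simp
    from im have "w\<^sup>2 = (k * sin (T * w))\<^sup>2"
      by (rule arg_cong)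
    moreover have "a\<^sup>2 = (k * cos (T * w))\<^sup>2"
      using re by simp
    moreover have "(k * sin (T * w))\<^sup>2 + (k * cos (T * w))\<^sup>2 = k\<^sup>2"
      by (simp add: power_mult_distrib flip: distrib_left)
    ultimately have "\<bar>w\<bar> = sqrt (k\<^sup>2 - a\<^sup>2)"
      by (simp flip: real_sqrt_abs)
    then have "T * \<bar>w\<bar> < arccos (a / k)"
      using phase_excess_neg[OF T a _ k(2)] False by (simp add: phase_excess_def)
    moreover have "-1 \<le> a / k" "a / k \<le> 1"
      using a \<open>k > 0\<close> False by (auto simp: field_simps)
    moreover have "cos (T * \<bar>w\<bar>) = a / k"
      using re \<open>k > 0\<close> by (cases "w \<ge> 0") (auto simp: field_simps)
    ultimately have "arccos (a / k) = T * \<bar>w\<bar>"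
      using arccos_cos[of "T * \<bar>w\<bar>"] arccos_ubound T by fastforce
    with \<open>T * \<bar>w\<bar> < arccos (a / k)\<close> show False
      by simp
  qed
qed

lemma char_sqnorm_at_k_u:
  assumes "T > 0" "a < 0"
  shows "char_sqnorm T a (k_u T a) (sqrt ((k_u T a)\<^sup>2 - a\<^sup>2)) = 0"
proof -
  define k where "k = k_u T a"
  define w where "w = sqrt (k\<^sup>2 - a\<^sup>2)"
  have "-a < k" "T * w = arccos (a / k)"
    using k_u_root[OF assms] by (simp_all add: k_def w_def phase_excess_def)
  moreover have "k > 0" "-1 \<le> a / k" "a / k \<le> 1"
    using \<open>-a < k\<close> assms by (auto simp: field_simps)
  ultimately have "cos (T * w) = a / k" "sin (T * w) = sqrt (1 - (a / k)\<^sup>2)"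
    by (simp_all add: sin_arccos)
  moreover have "sqrt (1 - (a / k)\<^sup>2) = w / k"
    using \<open>k > 0\<close> by (simp add: w_def field_simps power2_eq_square real_sqrt_divide flip: real_sqrt_mult)
  ultimately show ?thesis
    using \<open>k > 0\<close> unfolding char_sqnorm_eq_0_iff k_def[symmetric] w_def[symmetric] by simp
qed

lemma integrable_const_div_square_plus:
  fixes a c :: real
  assumes "a \<noteq> 0"
  shows "(\<lambda>w. c / (w\<^sup>2 + a\<^sup>2)) integrable_on UNIV"
proof -
  have "\<bar>a\<bar> > 0"
    using assms by simp
  from integrable_on_mult_right[OF has_integral_integrable[OF has_integral_inverse_square_plus[OF this]]]
  show ?thesis
    by simp
qed

lemma inverse_char_sqnorm_le_dominant:
  assumes a: "a < 0" and "k1 \<le> k2" and pos: "\<And>k w. k \<in> {k1..k2} \<Longrightarrow> char_sqnorm T a k w > 0"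
  obtains c where "c > 0" "\<And>k w. k \<in> {k1..k2} \<Longrightarrow> 1 / char_sqnorm T a k w \<le> c / (w\<^sup>2 + a\<^sup>2)"
proof -
  define W where "W = 2 * max \<bar>k1\<bar> \<bar>k2\<bar>"
  define K where "K = {k1..k2} \<times> {-W..W}"
  have "compact K"
    unfolding K_def by (intro compact_Times compact_Icc)
  moreover have "K \<noteq> {}"
    using \<open>k1 \<le> k2\<close> by (simp add: K_def W_def)
  moreover have "continuous_on K (\<lambda>p. char_sqnorm T a (fst p) (snd p))"
    unfolding char_sqnorm_def by (intro continuous_intros)
  ultimately have "\<exists>p\<in>K. \<forall>q\<in>K. char_sqnorm T a (fst p) (snd p) \<le> char_sqnorm T a (fst q) (snd q)"
    by (rule continuous_attains_inf)
  then obtain p where "p \<in> K" and p_min: "\<forall>q\<in>K. char_sqnorm T a (fst p) (snd p) \<le> char_sqnorm T a (fst q) (snd q)"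
    by blast
  define m where "m = char_sqnorm T a (fst p) (snd p)"
  have "fst p \<in> {k1..k2}"
    using \<open>p \<in> K\<close> by (simp add: K_def mem_Times_iff)
  then have "m > 0"
    by (simp add: m_def pos)
  define c where "c = max 4 ((W\<^sup>2 + a\<^sup>2) / m)"
  have "c > 0" "4 \<le> c" "(W\<^sup>2 + a\<^sup>2) / m \<le> c"
    by (simp_all add: c_def)
  then have "W\<^sup>2 + a\<^sup>2 \<le> c * m"
    using \<open>m > 0\<close> by (simp add: pos_divide_le_eq mult.commute)
  have dominated: "w\<^sup>2 + a\<^sup>2 \<le> c * char_sqnorm T a k w" if k: "k \<in> {k1..k2}" for k w
  proof (cases "\<bar>w\<bar> \<le> W")
    case True
    then have "w\<^sup>2 + a\<^sup>2 \<le> W\<^sup>2 + a\<^sup>2"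
      using power_mono[OF True abs_ge_zero, of 2] by simp
    also have "\<dots> \<le> c * m"
      by fact
    also have "\<dots> \<le> c * char_sqnorm T a k w"
      using bspec[OF p_min, of "(k, w)"] k True \<open>c > 0\<close> by (simp add: m_def K_def abs_le_iff)
    finally show ?thesis .
  next
    case False
    then have "2 * \<bar>k\<bar> \<le> \<bar>w\<bar>"
      using k by (auto simp: W_def)
    then have "(2 * \<bar>k\<bar>)\<^sup>2 \<le> \<bar>w\<bar>\<^sup>2"
      by (rule power_mono) simp
    then have "4 * k\<^sup>2 \<le> w\<^sup>2"
      by (simp add: power_mult_distrib)
    then have "w\<^sup>2 + a\<^sup>2 \<le> 4 * char_sqnorm T a k w"
      using char_sqnorm_ge[where T = T and a = a and k = k and w = w] zero_le_power2[of a] by linarith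
    also have "\<dots> \<le> c * char_sqnorm T a k w"
      using \<open>4 \<le> c\<close> char_sqnorm_nonneg by (rule mult_right_mono)
    finally show ?thesis .
  qed
  have "1 / char_sqnorm T a k w \<le> c / (w\<^sup>2 + a\<^sup>2)" if "k \<in> {k1..k2}" for k w
  proof -
    have "0 < w\<^sup>2 + a\<^sup>2"
      using a by (simp add: add_nonneg_pos)
    then show ?thesis
      using dominated[OF that, of w] pos[OF that, of w] by (simp add: divide_simps mult.commute)
  qed
  with \<open>c > 0\<close> show ?thesis
    using that by blast
qed

lemma integrable_inverse_char_sqnorm:
  assumes "a < 0" and pos: "\<And>w. char_sqnorm T a k w > 0"
  shows "(\<lambda>w. 1 / char_sqnorm T a k w) integrable_on UNIV"
proof -
  have "\<And>k' w. k' \<in> {k..k} \<Longrightarrow> char_sqnorm T a k' w > 0"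
    using pos by simp
  then obtain c where "\<And>k' w. k' \<in> {k..k} \<Longrightarrow> 1 / char_sqnorm T a k' w \<le> c / (w\<^sup>2 + a\<^sup>2)"
    using inverse_char_sqnorm_le_dominant[OF \<open>a < 0\<close> order_refl] by blast
  then have c: "\<And>w. 1 / char_sqnorm T a k w \<le> c / (w\<^sup>2 + a\<^sup>2)"
    by simp
  have "continuous_on UNIV (char_sqnorm T a k)"
    unfolding char_sqnorm_def by (intro continuous_intros)
  moreover have "char_sqnorm T a k w \<noteq> 0" for w
    using pos[of w] by simp
  ultimately have "continuous_on UNIV (\<lambda>w. 1 / char_sqnorm T a k w)"
    by (intro continuous_on_divide continuous_on_const) auto
  then have "(\<lambda>w. if w \<in> UNIV then 1 / char_sqnorm T a k w else 0) integrable_on cbox u v" for u v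
    using integrable_continuous_interval[OF continuous_on_subset[OF _ subset_UNIV]] by simp
  moreover have "norm (1 / char_sqnorm T a k w) \<le> c / (w\<^sup>2 + a\<^sup>2)" if "w \<in> UNIV" for w
    using c[of w] pos[of w] by simp
  moreover have "(\<lambda>w. c / (w\<^sup>2 + a\<^sup>2)) integrable_on UNIV"
    using \<open>a < 0\<close> by (intro integrable_const_div_square_plus) simp
  ultimately show ?thesis
    by (rule integrable_on_all_intervals_integrable_bound[of UNIV]) assumption+
qed

lemma f_H2_nonneg: "f_H2 T a k \<ge> 0"
proof (cases "(\<lambda>w. 1 / char_sqnorm T a k w) integrable_on UNIV")
  case True
  then show ?thesis
    using char_sqnorm_nonneg by (simp add: f_H2_eq_integral_char_sqnorm integral_nonneg)
next
  case False
  then show ?thesis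
    by (simp add: f_H2_eq_integral_char_sqnorm not_integrable_integral)
qed

lemma continuous_on_f_H2_Icc:
  assumes "a < 0" "k1 \<le> k2" and pos: "\<And>k w. k \<in> {k1..k2} \<Longrightarrow> char_sqnorm T a k w > 0"
  shows "continuous_on {k1..k2} (f_H2 T a)"
proof -
  obtain c where c: "\<And>k w. k \<in> {k1..k2} \<Longrightarrow> 1 / char_sqnorm T a k w \<le> c / (w\<^sup>2 + a\<^sup>2)"
    using inverse_char_sqnorm_le_dominant[OF assms] by blast
  show ?thesis
    unfolding continuous_on_sequentially f_H2_eq_integral_char_sqnorm comp_def
  proof (intro allI ballI impI, elim conjE)
    fix x :: "nat \<Rightarrow> real" and k
    assume k: "k \<in> {k1..k2}" and x: "\<forall>n. x n \<in> {k1..k2}" and lim: "x \<longlonglongrightarrow> k"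
    show "(\<lambda>n. integral UNIV (\<lambda>w. 1 / char_sqnorm T a (x n) w))
        \<longlonglongrightarrow> integral UNIV (\<lambda>w. 1 / char_sqnorm T a k w)"
    proof (rule dominated_convergence(2)[OF _ integrable_const_div_square_plus])
      show "(\<lambda>w. 1 / char_sqnorm T a (x n) w) integrable_on UNIV" for n
        using x pos by (intro integrable_inverse_char_sqnorm[OF \<open>a < 0\<close>]) auto
      show "norm (1 / char_sqnorm T a (x n) w) \<le> c / (w\<^sup>2 + a\<^sup>2)" for n w
        using c[of "x n" w] x pos[of "x n" w] by auto
      show "(\<lambda>n. 1 / char_sqnorm T a (x n) w) \<longlonglongrightarrow> 1 / char_sqnorm T a k w" for w
      proof (rule tendsto_divide[OF tendsto_const])
        show "(\<lambda>n. char_sqnorm T a (x n) w) \<longlonglongrightarrow> char_sqnorm T a k w"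
          unfolding char_sqnorm_def by (intro tendsto_intros lim)
        show "char_sqnorm T a k w \<noteq> 0"
          using pos[OF k, of w] by simp
      qed
    qed (use \<open>a < 0\<close> in simp)
  qed
qed

lemma continuous_on_f_H2:
  assumes "T > 0" "a < 0"
  shows "continuous_on {a<..<k_u T a} (f_H2 T a)"
proof (rule continuous_at_imp_continuous_on, intro ballI)
  fix k assume k: "k \<in> {a<..<k_u T a}"
  define k1 k2 where "k1 = (a + k) / 2" and "k2 = (k + k_u T a) / 2"
  have "continuous_on {k1..k2} (f_H2 T a)"
    using k char_sqnorm_pos[OF assms]
    by (intro continuous_on_f_H2_Icc \<open>a < 0\<close>) (auto simp: k1_def k2_def)
  moreover have "k \<in> interior {k1..k2}"
    using k by (simp add: k1_def k2_def)
  ultimately show "isCont (f_H2 T a) k"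
    by (rule continuous_on_interior)
qed

text \<open>Near a root (k', w') of the characteristic function on the imaginary axis the integrand
  stays large on a whole w-interval of length 2|k - k'|.\<close>

lemma f_H2_ge_near_root:
  assumes T: "T \<ge> 0" and "a < 0" and root: "char_sqnorm T a k' w' = 0" and "k \<noteq> k'"
    and pos: "\<And>w. char_sqnorm T a k w > 0"
  shows "2 / (\<bar>k - k'\<bar> * (2 + T * \<bar>k\<bar>)\<^sup>2) \<le> f_H2 T a k"
proof -
  define \<delta> where "\<delta> = \<bar>k - k'\<bar>"
  define M where "M = \<delta> * (2 + T * \<bar>k\<bar>)"
  have "\<delta> > 0" "M > 0"
    using \<open>k \<noteq> k'\<close> T by (simp_all add: \<delta>_def M_def add_pos_nonneg)
  have le: "1 / M\<^sup>2 \<le> 1 / char_sqnorm T a k w" if "w \<in> {w' - \<delta>..w' + \<delta>}" for w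
  proof -
    have "(1 + T * \<bar>k\<bar>) * \<bar>w - w'\<bar> \<le> (1 + T * \<bar>k\<bar>) * \<delta>"
      using that T by (intro mult_left_mono) auto
    then have "sqrt (char_sqnorm T a k w) \<le> M"
      using sqrt_char_sqnorm_lipschitz[OF T, of a k w k' w'] root
      by (simp add: M_def \<delta>_def algebra_simps)
    then have "(sqrt (char_sqnorm T a k w))\<^sup>2 \<le> M\<^sup>2"
      by (rule power_mono) (simp add: char_sqnorm_nonneg)
    then have "char_sqnorm T a k w \<le> M\<^sup>2"
      using char_sqnorm_nonneg[of T a k w] by simp
    then show ?thesis
      using pos[of w] \<open>M > 0\<close> by (intro divide_left_mono) auto
  qed
  have integrable: "(\<lambda>w. 1 / char_sqnorm T a k w) integrable_on UNIV"
    by (rule integrable_inverse_char_sqnorm[OF \<open>a < 0\<close> pos])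
  have "2 / (\<bar>k - k'\<bar> * (2 + T * \<bar>k\<bar>)\<^sup>2) = integral {w' - \<delta>..w' + \<delta>} (\<lambda>w. 1 / M\<^sup>2)"
    using \<open>\<delta> > 0\<close> by (simp add: M_def \<delta>_def power2_eq_square)
  also have "\<dots> \<le> integral {w' - \<delta>..w' + \<delta>} (\<lambda>w. 1 / char_sqnorm T a k w)"
    using integrable_on_subinterval[OF integrable] le by (intro integral_le) auto
  also have "\<dots> \<le> f_H2 T a k"
    unfolding f_H2_eq_integral_char_sqnorm
    using integrable_on_subinterval[OF integrable] integrable char_sqnorm_nonneg
    by (intro integral_subset_le) auto
  finally show ?thesis .
qed

lemma f_H2_ge_near_root_uniform:
  assumes "T > 0" "a < 0" "char_sqnorm T a k' w' = 0" "a < k" "k < k_u T a" "k \<noteq> k'"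
  shows "2 / (\<bar>k - k'\<bar> * (2 + T * k_u T a)\<^sup>2) \<le> f_H2 T a k"
proof -
  have "\<bar>k\<bar> \<le> k_u T a"
    using assms k_u_root(1)[OF assms(1,2)] by linarith
  then have "(2 + T * \<bar>k\<bar>)\<^sup>2 \<le> (2 + T * k_u T a)\<^sup>2"
    using assms(1) by (intro power_mono add_left_mono mult_left_mono) auto
  moreover have "0 < 2 + T * \<bar>k\<bar>" "\<bar>k - k'\<bar> > 0"
    using assms(1,6) by (simp_all add: add_pos_nonneg)
  ultimately have "2 / (\<bar>k - k'\<bar> * (2 + T * k_u T a)\<^sup>2) \<le> 2 / (\<bar>k - k'\<bar> * (2 + T * \<bar>k\<bar>)\<^sup>2)"
    by (intro divide_left_mono mult_left_mono mult_pos_pos) auto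
  also have "\<dots> \<le> f_H2 T a k"
    using assms char_sqnorm_pos[OF assms(1,2,4,5)] by (intro f_H2_ge_near_root) auto
  finally show ?thesis .
qed

lemma filterlim_f_H2_at_right:
  assumes "T > 0" "a < 0"
  shows "filterlim (f_H2 T a) at_top (at_right a)"
proof (rule filterlim_at_top_mono)
  define L where "L = 2 + T * k_u T a"
  have "L > 0"
    using assms k_u_root(1)[OF assms] by (simp add: L_def add_pos_nonneg)
  then show "filterlim (\<lambda>k. 2 / (\<bar>k - a\<bar> * L\<^sup>2)) at_top (at_right a)"
    by real_asymp
  have "eventually (\<lambda>k. a < k \<and> k < k_u T a) (at_right a)"
    unfolding eventually_at_right_field using k_u_root(1)[OF assms] assms
    by (intro exI[of _ "k_u T a"]) auto
  then show "eventually (\<lambda>k. 2 / (\<bar>k - a\<bar> * L\<^sup>2) \<le> f_H2 T a k) (at_right a)"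
    unfolding L_def
    by eventually_elim (rule f_H2_ge_near_root_uniform[OF assms char_sqnorm_at_pole]; auto)
qed

lemma filterlim_f_H2_at_left:
  assumes "T > 0" "a < 0"
  shows "filterlim (f_H2 T a) at_top (at_left (k_u T a))"
proof (rule filterlim_at_top_mono)
  define L where "L = 2 + T * k_u T a"
  have "L > 0"
    using assms k_u_root(1)[OF assms] by (simp add: L_def add_pos_nonneg)
  then show "filterlim (\<lambda>k. 2 / (\<bar>k - k_u T a\<bar> * L\<^sup>2)) at_top (at_left (k_u T a))"
    by real_asymp
  have "eventually (\<lambda>k. a < k \<and> k < k_u T a) (at_left (k_u T a))"
    unfolding eventually_at_left_field using k_u_root(1)[OF assms] assms
    by (intro exI[of _ a]) auto
  then show "eventually (\<lambda>k. 2 / (\<bar>k - k_u T a\<bar> * L\<^sup>2) \<le> f_H2 T a k) (at_left (k_u T a))"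
    unfolding L_def
    by eventually_elim (rule f_H2_ge_near_root_uniform[OF assms char_sqnorm_at_k_u[OF assms]]; auto)
qed

lemma continuous_on_attains_inf_if_large_at_ends:
  fixes g :: "real \<Rightarrow> real"
  assumes cont: "continuous_on {a<..<b} g" and x0: "x0 \<in> {a<..<b}"
    and left: "eventually (\<lambda>x. g x0 < g x) (at_right a)"
    and right: "eventually (\<lambda>x. g x0 < g x) (at_left b)"
  shows "\<exists>x\<in>{a<..<b}. \<forall>y\<in>{a<..<b}. g x \<le> g y"
proof -
  obtain c where "c > a" and c: "\<And>y. a < y \<Longrightarrow> y < c \<Longrightarrow> g x0 < g y"
    using left by (auto simp: eventually_at_right_field)
  obtain d where "d < b" and d: "\<And>y. d < y \<Longrightarrow> y < b \<Longrightarrow> g x0 < g y"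
    using right by (auto simp: eventually_at_left_field)
  define K where "K = {min c x0..max d x0}"
  have "K \<subseteq> {a<..<b}" "x0 \<in> K"
    using x0 \<open>c > a\<close> \<open>d < b\<close> by (auto simp: K_def)
  moreover have "compact K" "K \<noteq> {}"
    using \<open>x0 \<in> K\<close> by (auto simp: K_def)
  ultimately have "\<exists>x\<in>K. \<forall>y\<in>K. g x \<le> g y"
    using continuous_attains_inf continuous_on_subset[OF cont] by blast
  then obtain x where "x \<in> K" and x_min: "\<And>y. y \<in> K \<Longrightarrow> g x \<le> g y"
    by blast
  have "g x \<le> g y" if "y \<in> {a<..<b}" for y
  proof (cases "y \<in> K")
    case False
    then have "g x0 < g y"
      using that c d by (auto simp: K_def)
    then show ?thesis
      using x_min[OF \<open>x0 \<in> K\<close>] by linarith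
  qed (rule x_min)
  then show ?thesis
    using \<open>x \<in> K\<close> \<open>K \<subseteq> {a<..<b}\<close> by blast
qed

lemma is_kopt_exists:
  assumes "T > 0" "r > 0" "a < 0"
  shows "\<exists>k. is_kopt T r a k"
proof -
  have f_le_J: "f_H2 T a k \<le> J_cost T r a k" for k
    using f_H2_nonneg[of T a k] \<open>r > 0\<close> mult_right_mono[of 1 "1 + r * k\<^sup>2" "f_H2 T a k"]
    by (simp add: J_cost_def)
  have "continuous_on {a<..<k_u T a} (J_cost T r a)"
    unfolding J_cost_def by (intro continuous_intros continuous_on_f_H2 assms)
  moreover have "0 \<in> {a<..<k_u T a}"
    using assms k_u_root(1)[of T a] by simp
  moreover have "eventually (\<lambda>k. J_cost T r a 0 < J_cost T r a k) F"
    if "filterlim (f_H2 T a) at_top F" for F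
    using filterlim_at_top_mono[OF that always_eventually[OF allI[OF f_le_J]]]
    by (simp add: filterlim_at_top_dense)
  ultimately obtain k where "k \<in> {a<..<k_u T a}" "\<forall>k'\<in>{a<..<k_u T a}. J_cost T r a k \<le> J_cost T r a k'"
    using continuous_on_attains_inf_if_large_at_ends
      filterlim_f_H2_at_right[OF assms(1,3)] filterlim_f_H2_at_left[OF assms(1,3)] by blast
  then show ?thesis
    unfolding is_kopt_def by auto
qed

lemma inverse_eq_second_order:
  fixes A P :: real
  assumes "A > 0" "P > 0"
  shows "1 / P = 1 / A - (P - A) / A\<^sup>2 + (P - A)\<^sup>2 / (A\<^sup>2 * P)"
  using assms by (simp add: field_simps power2_eq_square)

lemma char_sqnorm_minus_square_plus:
  "char_sqnorm T (- b) k w - (w\<^sup>2 + b\<^sup>2) = k\<^sup>2 + 2 * k * (b * cos (T * w) - w * sin (T * w))"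
  by (simp add: char_sqnorm_expand)

lemma has_integral_second_order_expansion:
  assumes "b > 0" "T \<ge> 0"
  shows "((\<lambda>w. 1 / (w\<^sup>2 + b\<^sup>2) - (char_sqnorm T (- b) k w - (w\<^sup>2 + b\<^sup>2)) / (w\<^sup>2 + b\<^sup>2)\<^sup>2
      + c * (1 / (w\<^sup>2 + b\<^sup>2)\<^sup>2))
    has_integral (pi / b * (1 - k * (exp (- T * b) / b) - k\<^sup>2 / (2 * b\<^sup>2)) + c * (pi / (2 * b ^ 3)))) UNIV"
proof -
  have integrand: "1 / (w\<^sup>2 + b\<^sup>2) - (char_sqnorm T (- b) k w - (w\<^sup>2 + b\<^sup>2)) / (w\<^sup>2 + b\<^sup>2)\<^sup>2
      + c * (1 / (w\<^sup>2 + b\<^sup>2)\<^sup>2)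
    = 1 / (w\<^sup>2 + b\<^sup>2) - k\<^sup>2 * (1 / (w\<^sup>2 + b\<^sup>2)\<^sup>2)
      - (2 * k) * ((b * cos (T * w) - w * sin (T * w)) / (w\<^sup>2 + b\<^sup>2)\<^sup>2) + c * (1 / (w\<^sup>2 + b\<^sup>2)\<^sup>2)" for w
    unfolding char_sqnorm_minus_square_plus
    by (simp add: add_divide_distrib diff_divide_distrib right_diff_distrib)
  have constant_eq: "pi / b * (1 - k * (exp (- T * b) / b) - k\<^sup>2 / (2 * b\<^sup>2))
      = pi / b - k\<^sup>2 * (pi / (2 * b ^ 3)) - (2 * k) * (pi * exp (- T * b) / (2 * b\<^sup>2))"
    using assms by (simp add: field_simps power2_eq_square power3_eq_cube)
  show ?thesis
    unfolding integrand constant_eq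
    by (intro has_integral_add has_integral_diff has_integral_mult_right assms
        has_integral_inverse_square_plus has_integral_inverse_square_plus_squared has_integral_delay_kernel)
qed

lemma f_H2_ge_expansion:
  assumes "b > 0" "T \<ge> 0" and pos: "\<And>w. char_sqnorm T (- b) k w > 0"
  shows "pi / b * (1 - k * (exp (- T * b) / b) - k\<^sup>2 / (2 * b\<^sup>2)) \<le> f_H2 T (- b) k"
proof -
  have "1 / (w\<^sup>2 + b\<^sup>2) - (char_sqnorm T (- b) k w - (w\<^sup>2 + b\<^sup>2)) / (w\<^sup>2 + b\<^sup>2)\<^sup>2 + 0 * (1 / (w\<^sup>2 + b\<^sup>2)\<^sup>2)
      \<le> 1 / char_sqnorm T (- b) k w" for w
    using inverse_eq_second_order[of "w\<^sup>2 + b\<^sup>2" "char_sqnorm T (- b) k w"] pos[of w] \<open>b > 0\<close>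
    by (simp add: add_nonneg_pos)
  moreover have "((\<lambda>w. 1 / char_sqnorm T (- b) k w) has_integral f_H2 T (- b) k) UNIV"
    unfolding f_H2_eq_integral_char_sqnorm using \<open>b > 0\<close> pos
    by (intro integrable_integral integrable_inverse_char_sqnorm) auto
  ultimately show ?thesis
    using has_integral_le[OF has_integral_second_order_expansion[OF assms(1,2), of k 0]] by simp
qed

lemma char_sqnorm_ge_quarter:
  assumes "\<bar>k\<bar> \<le> b / 2"
  shows "(w\<^sup>2 + b\<^sup>2) / 4 \<le> char_sqnorm T (- b) k w"
proof -
  have "\<bar>k\<bar>\<^sup>2 \<le> (b / 2)\<^sup>2"
    using assms by (intro power_mono) auto
  moreover have "(- b)\<^sup>2 = b\<^sup>2" "(b / 2)\<^sup>2 = b\<^sup>2 / 4"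
    by (simp_all add: power_divide)
  ultimately have "k\<^sup>2 \<le> b\<^sup>2 / 4"
    by simp
  moreover have "w\<^sup>2 / 2 + b\<^sup>2 / 2 - k\<^sup>2 \<le> char_sqnorm T (- b) k w"
    using char_sqnorm_ge[where T = T and a = "- b" and k = k and w = w] by simp
  ultimately show ?thesis
    using zero_le_power2[of w] unfolding add_divide_distrib by linarith
qed

lemma inverse_char_sqnorm_le_second_order:
  fixes T b k w :: real
  assumes "b > 0" "\<bar>k\<bar> \<le> b / 2"
  defines "A \<equiv> w\<^sup>2 + b\<^sup>2" and "P \<equiv> char_sqnorm T (- b) k w"
  shows "1 / P \<le> 1 / A - (P - A) / A\<^sup>2 + 34 * k\<^sup>2 * (1 / A\<^sup>2)"
proof -
  define C where "C = b * cos (T * w) - w * sin (T * w)"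
  have "A > 0"
    using \<open>b > 0\<close> by (simp add: A_def add_nonneg_pos)
  have "A / 4 \<le> P"
    unfolding A_def P_def by (rule char_sqnorm_ge_quarter[OF assms(2)])
  then have "P > 0"
    using \<open>A > 0\<close> by linarith
  have "\<bar>k\<bar>\<^sup>2 \<le> (b / 2)\<^sup>2"
    using assms by (intro power_mono) auto
  then have "k\<^sup>2 \<le> b\<^sup>2 / 4"
    by (simp add: power_divide)
  then have "k\<^sup>2 \<le> A / 4"
    using zero_le_power2[of w] unfolding A_def add_divide_distrib by linarith
  have "C\<^sup>2 \<le> A"
    using cross_term_sq_le[of "sin (T * w)" "cos (T * w)" "- b" w] by (simp add: A_def C_def)
  have "P - A = k\<^sup>2 + 2 * k * C"
    unfolding P_def A_def C_def by (rule char_sqnorm_minus_square_plus)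
  then have "(P - A)\<^sup>2 = k\<^sup>2 * (k + 2 * C)\<^sup>2"
    by (simp add: power2_eq_square algebra_simps)
  also have "\<dots> \<le> k\<^sup>2 * (2 * k\<^sup>2 + 8 * C\<^sup>2)"
    using zero_le_power2[of "k - 2 * C"] by (intro mult_left_mono) (simp_all add: power2_eq_square algebra_simps)
  also have "\<dots> \<le> k\<^sup>2 * (17 / 2 * A)"
    using \<open>k\<^sup>2 \<le> A / 4\<close> \<open>C\<^sup>2 \<le> A\<close> by (intro mult_left_mono) auto
  finally have "(P - A)\<^sup>2 / (A\<^sup>2 * P) \<le> k\<^sup>2 * (17 / 2 * A) / (A\<^sup>2 * (A / 4))"
    using \<open>A / 4 \<le> P\<close> \<open>A > 0\<close> by (intro frac_le mult_left_mono) auto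
  also have "\<dots> = 34 * k\<^sup>2 * (1 / A\<^sup>2)"
    using \<open>A > 0\<close> by (simp add: field_simps power2_eq_square)
  finally show ?thesis
    using inverse_eq_second_order[OF \<open>A > 0\<close> \<open>P > 0\<close>] by linarith
qed

lemma f_H2_le_expansion:
  assumes "b > 0" "T \<ge> 0" "\<bar>k\<bar> \<le> b / 2"
  shows "f_H2 T (- b) k \<le> pi / b * (1 - k * (exp (- T * b) / b) + 17 * k\<^sup>2 / b\<^sup>2)"
proof -
  have pos: "char_sqnorm T (- b) k w > 0" for w
  proof -
    have "0 < (w\<^sup>2 + b\<^sup>2) / 4"
      using \<open>b > 0\<close> by (simp add: add_nonneg_pos)
    then show ?thesis
      using char_sqnorm_ge_quarter[OF assms(3), where T = T and w = w] by linarith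
  qed
  have "((\<lambda>w. 1 / char_sqnorm T (- b) k w) has_integral f_H2 T (- b) k) UNIV"
    unfolding f_H2_eq_integral_char_sqnorm using \<open>b > 0\<close> pos
    by (intro integrable_integral integrable_inverse_char_sqnorm) auto
  then have "f_H2 T (- b) k \<le> pi / b * (1 - k * (exp (- T * b) / b) - k\<^sup>2 / (2 * b\<^sup>2)) + 34 * k\<^sup>2 * (pi / (2 * b ^ 3))"
    by (rule has_integral_le[OF _ has_integral_second_order_expansion[OF assms(1,2)]])
      (rule inverse_char_sqnorm_le_second_order[OF assms(1,3)])
  also have "\<dots> = pi / b * (1 - k * (exp (- T * b) / b) + 33 / 2 * k\<^sup>2 / b\<^sup>2)"
    using \<open>b > 0\<close> by (simp add: field_simps power2_eq_square power3_eq_cube)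
  also have "\<dots> \<le> pi / b * (1 - k * (exp (- T * b) / b) + 17 * k\<^sup>2 / b\<^sup>2)"
    using \<open>b > 0\<close> by (intro mult_left_mono add_left_mono divide_right_mono) auto
  finally show ?thesis .
qed

lemma f_H2_at_zero:
  assumes "b > 0"
  shows "f_H2 T (- b) 0 = pi / b"
  using integral_unique[OF has_integral_inverse_square_plus[OF assms]]
  by (simp add: f_H2_eq_integral_char_sqnorm char_sqnorm_def add.commute)

lemma gain_abs_le_of_cost_le_zero:
  fixes r b e k :: real
  assumes "r > 0" "b > 0" "e > 0" "k\<^sup>2 \<le> 3 / 2 * b\<^sup>2" "4 \<le> r * b\<^sup>2"
    and cost: "(1 + r * k\<^sup>2) * (1 - k * e - k\<^sup>2 / (2 * b\<^sup>2)) \<le> 1"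
  shows "\<bar>k\<bar> \<le> 8 * (1 + 3 / 2 * r * b\<^sup>2) * e / r"
proof -
  define y u where "y = k\<^sup>2" and "u = 1 / (2 * b\<^sup>2)"
  have "y \<ge> 0" "y * u \<le> 3 / 4" "u \<le> r / 8"
    using assms by (simp_all add: y_def u_def field_simps)
  have "r * y * (y * u) \<le> r * y * (3 / 4)"
    using \<open>y * u \<le> 3 / 4\<close> \<open>y \<ge> 0\<close> \<open>r > 0\<close> by (intro mult_left_mono) auto
  then have "1 + r * y / 4 - y * u \<le> (1 + r * y) * (1 - y * u)"
    by (simp add: algebra_simps)
  moreover have "y * u \<le> y * (r / 8)"
    using \<open>u \<le> r / 8\<close> \<open>y \<ge> 0\<close> by (rule mult_left_mono)
  moreover have "y * (r / 8) = r * y / 8"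
    by simp
  ultimately have "1 + r * y / 8 \<le> (1 + r * y) * (1 - y * u)"
    by linarith
  then have "r * k\<^sup>2 / 8 \<le> (1 + r * k\<^sup>2) * (k * e)"
    using cost by (simp add: y_def u_def algebra_simps)
  also have "\<dots> \<le> (1 + r * k\<^sup>2) * (\<bar>k\<bar> * e)"
    using assms by (intro mult_left_mono) (auto simp: add_nonneg_nonneg)
  also have "\<dots> \<le> (1 + 3 / 2 * r * b\<^sup>2) * (\<bar>k\<bar> * e)"
    using assms by (intro mult_right_mono) auto
  finally have "(r / 8 * \<bar>k\<bar>) * \<bar>k\<bar> \<le> ((1 + 3 / 2 * r * b\<^sup>2) * e) * \<bar>k\<bar>"
    by (simp add: power2_eq_square mult_ac)
  then have "r / 8 * \<bar>k\<bar> \<le> (1 + 3 / 2 * r * b\<^sup>2) * e"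
    using assms by (cases "k = 0") (auto simp: add_pos_nonneg intro: mult_right_le_imp_le)
  then show ?thesis
    using \<open>r > 0\<close> by (simp add: field_simps)
qed

text \<open>Up to the factor pi/b the two sides bound J(k) from below and J(k0) from above; since
  J(k) is approximately pi/b (1 - k e + r k^2), it is minimised near k0 = e/(2r).\<close>

lemma gain_ratio_sq_le_of_cost_le:
  fixes r b e k k0 :: real
  assumes "r > 0" "b > 0" "e > 0" "k0 = e / (2 * r)" "\<bar>k\<bar> \<le> 1" "k0 \<le> 1"
    and cost: "(1 + r * k\<^sup>2) * (1 - k * e - k\<^sup>2 / (2 * b\<^sup>2))
      \<le> (1 + r * k0\<^sup>2) * (1 - k0 * e + 17 * k0\<^sup>2 / b\<^sup>2)"
    and small: "(1 + r) / (2 * b\<^sup>2) + r * e \<le> r / 4"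
  shows "(k / k0 - 1)\<^sup>2 \<le> 36 * (1 + r) / (r * b\<^sup>2) + 4 * e"
proof -
  define u where "u = 1 / (2 * b\<^sup>2)"
  define \<eta> \<mu> where "\<eta> = (1 + r) * u + r * e" and "\<mu> = 34 * (1 + r) * u"
  have "k0 > 0" "e = 2 * r * k0" "u > 0"
    using assms by (simp_all add: u_def)
  have "r * (k - k0)\<^sup>2 \<le> k\<^sup>2 * u + r * k ^ 3 * e + r * k ^ 4 * u + 34 * k0\<^sup>2 * u + 34 * r * k0 ^ 4 * u"
  proof -
    have "(1 + r * k\<^sup>2) * (1 - k * e - k\<^sup>2 / (2 * b\<^sup>2))
        = 1 + r * (k - k0)\<^sup>2 - r * k0\<^sup>2 - k\<^sup>2 * u - r * k ^ 3 * e - r * k ^ 4 * u"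
      "(1 + r * k0\<^sup>2) * (1 - k0 * e + 17 * k0\<^sup>2 / b\<^sup>2)
        = 1 - r * k0\<^sup>2 + 34 * k0\<^sup>2 * u - r * k0 ^ 3 * e + 34 * r * k0 ^ 4 * u"
      unfolding \<open>e = 2 * r * k0\<close> u_def
      by (simp_all add: power2_eq_square power3_eq_cube power4_eq_xxxx algebra_simps
          add_divide_distrib diff_divide_distrib)
    moreover have "r * k0 ^ 3 * e \<ge> 0"
      using assms \<open>k0 > 0\<close> by simp
    ultimately show ?thesis
      using cost by linarith
  qed
  also have "\<dots> \<le> k\<^sup>2 * \<eta> + k0\<^sup>2 * \<mu>"
  proof -
    have "k\<^sup>2 \<le> 1" "k0\<^sup>2 \<le> 1"
      using assms \<open>k0 > 0\<close> by (simp_all add: abs_square_le_1 power_le_one)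
    then have "k\<^sup>2 * k \<le> k\<^sup>2 * 1" "k\<^sup>2 * k\<^sup>2 \<le> k\<^sup>2 * 1" "k0\<^sup>2 * k0\<^sup>2 \<le> k0\<^sup>2 * 1"
      using \<open>\<bar>k\<bar> \<le> 1\<close> by (intro mult_left_mono; simp)+
    then have "k ^ 3 \<le> k\<^sup>2" "k ^ 4 \<le> k\<^sup>2" "k0 ^ 4 \<le> k0\<^sup>2"
      by (simp_all add: power2_eq_square power3_eq_cube power4_eq_xxxx mult.assoc)
    then show ?thesis
      using assms \<open>u > 0\<close> by (simp add: \<eta>_def \<mu>_def algebra_simps mult_left_mono mult_right_mono
          add_mono)
  qed
  finally have "r * (k - k0)\<^sup>2 \<le> k\<^sup>2 * \<eta> + k0\<^sup>2 * \<mu>" .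
  moreover have "k = k / k0 * k0"
    using \<open>k0 > 0\<close> by simp
  ultimately have "k0\<^sup>2 * (r * (k / k0 - 1)\<^sup>2) \<le> k0\<^sup>2 * ((k / k0)\<^sup>2 * \<eta> + \<mu>)"
    by (metis (no_types, lifting) power2_eq_square mult.commute mult.left_commute
        distrib_left left_diff_distrib' mult_1)
  then have "r * (k / k0 - 1)\<^sup>2 \<le> (k / k0)\<^sup>2 * \<eta> + \<mu>"
    using \<open>k0 > 0\<close> by simp
  moreover have "(k / k0)\<^sup>2 * \<eta> \<le> (2 * (k / k0 - 1)\<^sup>2 + 2) * \<eta>"
  proof (rule mult_right_mono)
    have "x\<^sup>2 \<le> 2 * (x - 1)\<^sup>2 + 2" for x :: real
      using zero_le_power2[of "x - 2"] by (simp add: power2_eq_square algebra_simps)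
    then show "(k / k0)\<^sup>2 \<le> 2 * (k / k0 - 1)\<^sup>2 + 2" .
    show "0 \<le> \<eta>"
      using assms \<open>u > 0\<close> by (simp add: \<eta>_def)
  qed
  moreover have "2 * \<eta> * (k / k0 - 1)\<^sup>2 \<le> r / 2 * (k / k0 - 1)\<^sup>2"
    using small by (intro mult_right_mono) (simp_all add: \<eta>_def u_def mult_ac)
  ultimately have "r / 2 * (k / k0 - 1)\<^sup>2 \<le> 2 * \<eta> + \<mu>"
    by (simp add: algebra_simps)
  also have "\<dots> = r / 2 * (36 * (1 + r) / (r * b\<^sup>2) + 4 * e)"
    using \<open>r > 0\<close> \<open>b > 0\<close> by (simp add: \<eta>_def \<mu>_def u_def field_simps)
  finally show ?thesis
    using \<open>r > 0\<close> by (simp add: mult_le_cancel_left_pos)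
qed

lemma is_kopt_ratio_sq_le:
  fixes T r b k :: real
  defines "e \<equiv> exp (- T * b) / b"
  assumes "T > 0" "r > 0" "b \<ge> 2" "pi / T \<le> b / 5" and rb: "4 \<le> r * b\<^sup>2"
    and K: "8 * (1 + 3 / 2 * r * b\<^sup>2) * e / r \<le> 1" and "e / (2 * r) \<le> 1"
    and small: "(1 + r) / (2 * b\<^sup>2) + r * e \<le> r / 4"
    and kopt: "is_kopt T r (- b) k"
  shows "(k / (e / (2 * r)) - 1)\<^sup>2 \<le> 36 * (1 + r) / (r * b\<^sup>2) + 4 * e"
proof -
  define k0 where "k0 = e / (2 * r)"
  have "b > 0" "e > 0" "k0 > 0" "k0 \<le> 1"
    using assms by (simp_all add: e_def k0_def)
  have ku: "b < k_u T (- b)" "k_u T (- b) \<le> 6 / 5 * b"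
    using k_u_root(1,3)[OF \<open>T > 0\<close>, of "- b"] \<open>b > 0\<close> \<open>pi / T \<le> b / 5\<close> by linarith+
  have k: "- b < k" "k < k_u T (- b)"
    and min: "\<And>k'. - b < k' \<Longrightarrow> k' < k_u T (- b) \<Longrightarrow> J_cost T r (- b) k \<le> J_cost T r (- b) k'"
    using kopt by (auto simp: is_kopt_def)
  have "(1 + r * k\<^sup>2) * (pi / b * (1 - k * e - k\<^sup>2 / (2 * b\<^sup>2))) \<le> J_cost T r (- b) k"
    unfolding J_cost_def e_def using \<open>r > 0\<close> \<open>b > 0\<close> \<open>T > 0\<close> char_sqnorm_pos[OF \<open>T > 0\<close> _ k] 
    by (intro mult_left_mono f_H2_ge_expansion) (auto simp: add_nonneg_nonneg)
  then have lower: "pi / b * ((1 + r * k\<^sup>2) * (1 - k * e - k\<^sup>2 / (2 * b\<^sup>2))) \<le> J_cost T r (- b) k"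
    by (simp add: mult_ac)
  have "pi / b > 0"
    using \<open>b > 0\<close> by simp
  note lower
  also have "J_cost T r (- b) k \<le> J_cost T r (- b) 0"
    using min \<open>b > 0\<close> ku by simp
  also have "\<dots> = pi / b * 1"
    using f_H2_at_zero[OF \<open>b > 0\<close>] by (simp add: J_cost_def)
  finally have cost0: "(1 + r * k\<^sup>2) * (1 - k * e - k\<^sup>2 / (2 * b\<^sup>2)) \<le> 1"
    using \<open>pi / b > 0\<close> by (simp only: mult_le_cancel_left_pos)
  have "k\<^sup>2 \<le> 3 / 2 * b\<^sup>2"
  proof -
    have "\<bar>k\<bar> \<le> 6 / 5 * b"
      using k ku by linarith
    then have "\<bar>k\<bar>\<^sup>2 \<le> (6 / 5 * b)\<^sup>2"
      by (rule power_mono) simp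
    then have "k\<^sup>2 \<le> (6 / 5 * b)\<^sup>2"
      by (simp only: power2_abs)
    moreover have "(6 / 5 * b)\<^sup>2 = 36 / 25 * b\<^sup>2"
      by (simp add: power2_eq_square)
    ultimately show ?thesis
      using zero_le_power2[of b] by linarith
  qed
  from gain_abs_le_of_cost_le_zero[OF \<open>r > 0\<close> \<open>b > 0\<close> \<open>e > 0\<close> this rb cost0]
  have "\<bar>k\<bar> \<le> 1"
    using K by linarith
  note lower
  also have "J_cost T r (- b) k \<le> J_cost T r (- b) k0"
    using min \<open>k0 > 0\<close> \<open>k0 \<le> 1\<close> \<open>b \<ge> 2\<close> ku by (simp add: k0_def)
  also have "\<dots> \<le> pi / b * ((1 + r * k0\<^sup>2) * (1 - k0 * e + 17 * k0\<^sup>2 / b\<^sup>2))"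
    unfolding J_cost_def e_def using \<open>r > 0\<close> \<open>b > 0\<close> \<open>T > 0\<close> \<open>k0 > 0\<close> \<open>k0 \<le> 1\<close> \<open>b \<ge> 2\<close>
    by (subst mult.left_commute, intro mult_left_mono f_H2_le_expansion) (auto simp: add_nonneg_nonneg)
  finally have "(1 + r * k\<^sup>2) * (1 - k * e - k\<^sup>2 / (2 * b\<^sup>2))
      \<le> (1 + r * k0\<^sup>2) * (1 - k0 * e + 17 * k0\<^sup>2 / b\<^sup>2)"
    using \<open>pi / b > 0\<close> by (simp only: mult_le_cancel_left_pos)
  from gain_ratio_sq_le_of_cost_le[OF \<open>r > 0\<close> \<open>b > 0\<close> \<open>e > 0\<close> k0_def \<open>\<bar>k\<bar> \<le> 1\<close> \<open>k0 \<le> 1\<close> this small]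
  show ?thesis
    by (simp add: k0_def)
qed

lemma tendsto_is_kopt_ratio:
  assumes "T > 0" "r > 0" and kopt: "\<And>a. a < 0 \<Longrightarrow> is_kopt T r a (kopt a)"
  shows "((\<lambda>b. kopt (- b) / (exp (- T * b) / b / (2 * r))) \<longlongrightarrow> 1) at_top"
proof -
  define bound where "bound b = 36 * (1 + r) / (r * b\<^sup>2) + 4 * (exp (- T * b) / b)" for b
  have "eventually (\<lambda>b::real. 2 \<le> b) at_top" "eventually (\<lambda>b. pi / T \<le> b / 5) at_top"
    "eventually (\<lambda>b. 4 \<le> r * b\<^sup>2) at_top"
    using assms(1,2) by real_asymp+
  moreover have "eventually (\<lambda>b. 8 * (1 + 3 / 2 * r * b\<^sup>2) * (exp (- T * b) / b) / r \<le> 1) at_top"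
    "eventually (\<lambda>b. exp (- T * b) / b / (2 * r) \<le> 1) at_top"
    "eventually (\<lambda>b. (1 + r) / (2 * b\<^sup>2) + r * (exp (- T * b) / b) \<le> r / 4) at_top"
    using assms(1,2) by real_asymp+
  ultimately have "eventually (\<lambda>b. 2 \<le> b \<and> pi / T \<le> b / 5 \<and> 4 \<le> r * b\<^sup>2
      \<and> 8 * (1 + 3 / 2 * r * b\<^sup>2) * (exp (- T * b) / b) / r \<le> 1 \<and> exp (- T * b) / b / (2 * r) \<le> 1
      \<and> (1 + r) / (2 * b\<^sup>2) + r * (exp (- T * b) / b) \<le> r / 4) at_top"
    by (intro eventually_conj)
  then have "eventually (\<lambda>b. norm (kopt (- b) / (exp (- T * b) / b / (2 * r)) - 1) \<le> sqrt (bound b)) at_top"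
  proof eventually_elim
    case (elim b)
    then have "is_kopt T r (- b) (kopt (- b))"
      using kopt[of "- b"] by simp
    with elim have "(kopt (- b) / (exp (- T * b) / b / (2 * r)) - 1)\<^sup>2 \<le> bound b"
      unfolding bound_def using assms(1,2) by (intro is_kopt_ratio_sq_le) simp_all
    then have "sqrt ((kopt (- b) / (exp (- T * b) / b / (2 * r)) - 1)\<^sup>2) \<le> sqrt (bound b)"
      by (rule real_sqrt_le_mono)
    then show ?case
      by simp
  qed
  moreover have "((\<lambda>b. sqrt (bound b)) \<longlongrightarrow> 0) at_top"
    unfolding bound_def using assms(1,2) by real_asymp
  ultimately have "((\<lambda>b. kopt (- b) / (exp (- T * b) / b / (2 * r)) - 1) \<longlongrightarrow> 0) at_top"
    by (rule Lim_null_comparison)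
  then show ?thesis
    by (simp add: LIM_zero_iff)
qed

theorem proposition3:
  fixes T r :: real
  assumes "T > 0" and "r > 0"
  shows "(\<forall>a<0. \<exists>k. is_kopt T r a k) \<and>
         (\<forall>kopt :: real \<Rightarrow> real. (\<forall>a<0. is_kopt T r a (kopt a)) \<longrightarrow>
            ((\<lambda>a. (1 / kopt a) * (exp (T * a) / (2 * r * \<bar>a\<bar>))) \<longlongrightarrow> 1) at_bot)"
proof (intro conjI allI impI)
  show "\<exists>k. is_kopt T r a k" if "a < 0" for a
    using is_kopt_exists[OF assms that] .
  fix kopt :: "real \<Rightarrow> real"
  assume "\<forall>a<0. is_kopt T r a (kopt a)"
  then have "((\<lambda>b. kopt (- b) / (exp (- T * b) / b / (2 * r))) \<longlongrightarrow> 1) at_top"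
    using tendsto_is_kopt_ratio[OF assms] by blast
  then have "((\<lambda>b. 1 / (kopt (- b) / (exp (- T * b) / b / (2 * r)))) \<longlongrightarrow> 1 / 1) at_top"
    by (intro tendsto_divide tendsto_const) simp_all
  moreover have "eventually (\<lambda>b. 1 / (kopt (- b) / (exp (- T * b) / b / (2 * r)))
      = 1 / kopt (- b) * (exp (T * - b) / (2 * r * \<bar>- b\<bar>))) at_top"
    using eventually_gt_at_top[of 0] by eventually_elim (simp add: field_simps)
  ultimately have "((\<lambda>b. 1 / kopt (- b) * (exp (T * - b) / (2 * r * \<bar>- b\<bar>))) \<longlongrightarrow> 1 / 1) at_top"
    by (rule Lim_transform_eventually)
  then show "((\<lambda>a. 1 / kopt a * (exp (T * a) / (2 * r * \<bar>a\<bar>))) \<longlongrightarrow> 1) at_bot"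
    unfolding filterlim_at_bot_mirror by simp
qed

end
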